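(* Consider the Neutralization-Based Reclamation (NBR) scheme described in the context. Let $T_r$ be a reclaiming thread and $T_w$ another thread. If $T_w$ enters its write phase (i.e. performs the sequentially consistent store of false to its restartable flag, after having written its reservations) before it is signalled by $T_r$, then $T_r$, when it subsequently scans the reservation slots of $T_w$, is guaranteed to read all the reservations that $T_w$ made before entering its write phase.
   Context: Setting: an asynchronous shared-memory system with a fixed set of threads operating on a linked concurrent data structure whose nodes are reached from a fixed set of entry points. NBR (Neutralization-Based Reclamation) works as follows. Each thread has a private limbo bag of retired nodes, a thread-local atomic boolean flag restartable, and a row of a shared single-writer multi-reader array reservations (at most $r$ slots per thread). Each data structure operation consists of an optional preamble (no access to shared nodes), then one or more read phases each followed by a write phase. Immediately before a read phase the thread sets a checkpoint (via sigsetjmp); at the beginning of a read phase it clears its reservations and then stores true into restartable (sequentially consistent store); during a read phase it only reads, and only shared nodes discovered within that phase starting from an entry point. To end a read phase and enter the write phase, the thread writes pointers to all shared nodes it will access in the write phase into its reservation slots and then stores false into restartable (sequentially consistent store); in the write phase it accesses only reserved nodes. On receipt of a neutralizing signal a thread runs a handler: if restartable is false it returns and continues; otherwise it jumps back (siglongjmp) to its last checkpoint, discarding all private references obtained in the read phase. A thread retires an unlinked node by appending it to its limbo bag; when the limbo bag exceeds a predetermined size threshold, the thread (a reclaimer) first sends a neutralizing signal to every other thread, then scans the reservations of all threads, then frees every node in its limbo bag that is not reserved. Assumption: if a thread $T_i$ sends a signal to $T_j$, then by the time $T_i$ finishes sending it, $T_j$ has received it and will execute the signal handler before taking any further step of its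 program. *)

theory Defs
  imports Main
begin

text \<open>Memory follows x86-TSO:
  ordinary stores go into a per-thread FIFO store buffer and are later
  flushed to main memory; a sequentially consistent store requires the
  issuing thread's store buffer to be drained and writes directly to memory;
  a load returns the newest value for the location in the thread's own
  store buffer, or else the value in main memory.\<close>

datatype 't loc =
    Restartable 't
  | Resv 't nat
  | Node nat              \<comment> \<open>fields of shared data structure nodes\<close>

datatype vval = VBool bool | VPtr nat | VNull

record 't state =
  mem :: "'t loc \<Rightarrow> vval"
  buf :: "'t \<Rightarrow> ('t loc \<times> vval) list"

datatype 't act =
    Write 't "'t loc" vval
  | SCStore 't "'t loc" vval
  | Read 't "'t loc" vval
  | Flush 't
  | Signal 't 't                     \<comment> \<open>Signal a b: a sends a neutralizing signal to b\<close>
  | Local 't                         \<comment> \<open>any other step (control flow, handler, jumps)\<close>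

definition load_val :: "'t state \<Rightarrow> 't \<Rightarrow> 't loc \<Rightarrow> vval" where
  "load_val s t l = (case map_of (rev (buf s t)) l of Some v \<Rightarrow> v | None \<Rightarrow> mem s l)"

fun step :: "'t state \<Rightarrow> 't act \<Rightarrow> 't state \<Rightarrow> bool" where
  "step s (Write t l v) s' = (s' = s\<lparr>buf := (buf s)(t := buf s t @ [(l, v)])\<rparr>)"
| "step s (SCStore t l v) s' = (buf s t = [] \<and> s' = s\<lparr>mem := (mem s)(l := v)\<rparr>)"
| "step s (Read t l v) s' = (v = load_val s t l \<and> s' = s)"
| "step s (Flush t) s' = (\<exists>l v rest. buf s t = (l, v) # rest \<and>
       s' = s\<lparr>mem := (mem s)(l := v), buf := (buf s)(t := rest)\<rparr>)"
| "step s (Signal a b) s' = (s' = s)"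
| "step s (Local t) s' = (s' = s)"

text \<open>An execution: a run of states and actions starting with empty store buffers
  (initial memory arbitrary).  Positions in the run are real-time order.\<close>
definition execution :: "(nat \<Rightarrow> 't state) \<Rightarrow> (nat \<Rightarrow> 't act) \<Rightarrow> bool" where
  "execution S A \<longleftrightarrow> (\<forall>t. buf (S 0) t = []) \<and> (\<forall>n. step (S n) (A n) (S (Suc n)))"

fun stores_to :: "'t act \<Rightarrow> 't loc \<Rightarrow> bool" where
  "stores_to (Write t l v) l' = (l = l')"
| "stores_to (SCStore t l v) l' = (l = l')"
| "stores_to _ _ = False"

fun actor :: "'t act \<Rightarrow> 't" where
  "actor (Write t l v) = t" | "actor (SCStore t l v) = t" | "actor (Read t l v) = t"
| "actor (Flush t) = t" | "actor (Signal a b) = a" | "actor (Local t) = t"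

definition single_writer_reservations :: "(nat \<Rightarrow> 't act) \<Rightarrow> bool" where
  "single_writer_reservations A \<longleftrightarrow>
     (\<forall>n t k. stores_to (A n) (Resv t k) \<longrightarrow> actor (A n) = t)"

end

theory Submission
  imports Defs
begin

text \<open>Only T_w ever buffers a store to its slot, so from the reservation on, T_w's own view
  of the slot (buffer first, then memory) stays p: flushing one's own buffer does not change
  one's own view.  The SC store of false can only execute once T_w's buffer is drained, and
  since no store to the slot follows, the slot stays unbuffered; from then on memory holds p,
  and T_r, having nothing buffered for the slot, reads memory.  The signal matters only in
  placing the SC store before the scan.\<close>

lemma execution_step: "execution S A \<Longrightarrow> step (S n) (A n) (S (Suc n))"
  by (simp add: execution_def)

lemma execution_buffered_Resv_owner:
  assumes exec: "execution S A" and swmr: "single_writer_reservations A"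
  shows "(Resv t k, v) \<in> set (buf (S n) t') \<Longrightarrow> t' = t"
proof (induction n arbitrary: t' v)
  case 0
  then show ?case using exec by (simp add: execution_def)
next
  case (Suc n)
  have step: "step (S n) (A n) (S (Suc n))" using exec by (rule execution_step)
  show ?case
  proof (cases "A n")
    case (Write t'' l w)
    then have "l = Resv t k \<Longrightarrow> t'' = t"
      using swmr unfolding single_writer_reservations_def by (metis actor.simps(1) stores_to.simps(1))
    then show ?thesis using Suc step Write by (auto split: if_splits)
  next
    case (Flush t'')
    then obtain l w rest where buf: "buf (S n) t'' = (l, w) # rest"
      and "S (Suc n) = (S n)\<lparr>mem := (mem (S n))(l := w), buf := (buf (S n))(t'' := rest)\<rparr>"
      using step by auto
    then have "set (buf (S (Suc n)) t') \<subseteq> set (buf (S n) t')" by auto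
    then show ?thesis using Suc by blast
  qed (use Suc step in auto)
qed

lemma load_val_unbuffered: "(\<forall>v. (l, v) \<notin> set (buf s t)) \<Longrightarrow> load_val s t l = mem s l"
  by (auto simp: load_val_def dest: map_of_SomeD split: option.split)

lemma step_Write_load_val: "step s (Write t l v) s' \<Longrightarrow> load_val s' t l = v"
  by (simp add: load_val_def)

lemma step_load_val_unchanged:
  assumes step: "step s a s'" and no_store: "\<not> stores_to a l"
    and only_t_buffers: "\<And>t' v. (l, v) \<in> set (buf s t') \<Longrightarrow> t' = t"
  shows "load_val s' t l = load_val s t l"
proof (cases a)
  case (Flush t')
  then obtain l' w rest where buf: "buf s t' = (l', w) # rest"
    and s': "s' = s\<lparr>mem := (mem s)(l' := w), buf := (buf s)(t' := rest)\<rparr>"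
    using step by auto
  show ?thesis
  proof (cases "t' = t")
    case True
    then show ?thesis using buf s' by (simp add: load_val_def map_add_def split: option.split)
  next
    case False
    then have "l' \<noteq> l" using only_t_buffers[of w t'] buf by auto
    then show ?thesis using False s' by (simp add: load_val_def split: option.split)
  qed
qed (use step no_store in \<open>auto simp: load_val_def split: option.split\<close>)

lemma step_unbuffered:
  assumes "step s a s'" "\<not> stores_to a l" "\<forall>v. (l, v) \<notin> set (buf s t)"
  shows "\<forall>v. (l, v) \<notin> set (buf s' t)"
  using assms by (cases a) (auto split: if_splits)

theorem lemma5:
  fixes S :: "nat \<Rightarrow> 't state" and A :: "nat \<Rightarrow> 't act"
    and Tr Tw :: 't and r k i j s c :: nat and p v :: vval
  assumes exec: "execution S A"
    and swmr: "single_writer_reservations A"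
    and distinct: "Tr \<noteq> Tw"
    and slot: "k < r"
    \<comment> \<open>T_w reserves p in slot k ...\<close>
    and reserve: "A i = Write Tw (Resv Tw k) p"
    \<comment> \<open>... then enters its write phase by the SC store of false to restartable ...\<close>
    and enter_write: "i < j" "A j = SCStore Tw (Restartable Tw) (VBool False)"
    \<comment> \<open>... before T_r signals T_w ...\<close>
    and signal: "j < s" "A s = Signal Tr Tw"
    \<comment> \<open>... and T_r subsequently scans slot k of T_w, reading v.\<close>
    and scan: "s < c" "A c = Read Tr (Resv Tw k) v"
    \<comment> \<open>p is the reservation made in slot k before entering the write phase
        (no later store to that slot has happened up to the scan)\<close>
    and last_res: "\<forall>n. i < n \<and> n < c \<longrightarrow> \<not> stores_to (A n) (Resv Tw k)"
  shows "v = p"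
proof -
  let ?L = "Resv Tw k"
  note exec_step = execution_step[OF exec]
  note owner = execution_buffered_Resv_owner[OF exec swmr]
  have "Suc i \<le> c" using \<open>i < j\<close> \<open>j < s\<close> \<open>s < c\<close> by simp
  then have Tw_sees_p: "load_val (S c) Tw ?L = p"
  proof (induction rule: dec_induct)
    case base
    show ?case using exec_step[of i] reserve by (simp add: step_Write_load_val)
  next
    case (step n)
    then show ?case
      using step_load_val_unchanged[OF exec_step, of n ?L Tw] last_res owner by auto
  qed
  have "j \<le> c" using \<open>j < s\<close> \<open>s < c\<close> by simp
  then have Tw_unbuffered: "\<forall>w. (?L, w) \<notin> set (buf (S c) Tw)"
  proof (induction rule: dec_induct)
    case base
    show ?case using exec_step[of j] enter_write by simp
  next
    case (step n)
    then show ?case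
      using step_unbuffered[OF exec_step] last_res \<open>i < j\<close> by auto
  qed
  have "v = load_val (S c) Tr ?L" using exec_step[of c] scan by simp
  also have "\<dots> = mem (S c) ?L" using owner distinct by (blast intro: load_val_unbuffered)
  also have "\<dots> = p" using Tw_sees_p Tw_unbuffered load_val_unbuffered by metis
  finally show ?thesis .
qed

end
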